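(* Let $P$ and $Q$ be lattice paths from $(0,0)$ to $(m,r)$ with $P$ never going above $Q$ such that the region bounded by $P$ and $Q$ is a border strip. Then the number of facets of the lattice path matroid polytope $\mathcal{P}(M[P,Q])$ is $m+r+d$, where $d$ is the number of outside corners of the region $[P,Q]$.
   Context: Lattice paths use steps $E=(1,0)$, $N=(0,1)$. For $P,Q$ from $(0,0)$ to $(m,r)$ with $P$ never above $Q$, $M[P,Q]$ is the matroid on $[m+r]$ whose bases are the $r$-subsets $B$ such that the lattice path with North steps exactly at positions in $B$ stays in the region between $P$ and $Q$; $\mathcal{P}(M[P,Q])=\mathrm{conv}\{\sum_{b\in B}e_b: B\text{ a basis}\}\subseteq\mathbb{R}^{m+r}$. A border strip is a connected nonempty skew shape containing no $2\times 2$ square. An outside corner of $[P,Q]$ is a lattice point which is a corner $NE$ (North step followed by East step) on $P$ or a corner $EN$ (East step followed by North step) on $Q$.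
   Formalization: The paths P and Q are also required to meet only at (0,0) and (m,r): after each k-th step with 0 < k < m+r, P lies strictly below Q. The paper assumes this as well. *)

theory Defs
  imports "HOL-Analysis.Analysis"
begin

text \<open>Lattice paths are encoded as bool lists: True = North step N=(0,1),
  False = East step E=(1,0). Steps are numbered 1,...,length from the start.\<close>

definition lattice_path :: "nat \<Rightarrow> nat \<Rightarrow> bool list \<Rightarrow> bool" where
  "lattice_path m r P \<longleftrightarrow> length P = m + r \<and> length (filter id P) = r"

definition ht :: "bool list \<Rightarrow> nat \<Rightarrow> nat" where
  "ht P k = length (filter id (take k P))"

definition pt :: "bool list \<Rightarrow> nat \<Rightarrow> nat \<times> nat" where
  "pt P k = (k - ht P k, ht P k)"

definition never_above :: "bool list \<Rightarrow> bool list \<Rightarrow> bool" where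
  "never_above P Q \<longleftrightarrow> (\<forall>k \<le> length P. ht P k \<le> ht Q k)"

definition stays_between :: "bool list \<Rightarrow> bool list \<Rightarrow> bool list \<Rightarrow> bool" where
  "stays_between P Q R \<longleftrightarrow> (\<forall>k \<le> length R. ht P k \<le> ht R k \<and> ht R k \<le> ht Q k)"

definition path_of :: "nat \<Rightarrow> nat set \<Rightarrow> bool list" where
  "path_of n B = map (\<lambda>i. i \<in> B) [1..<n+1]"

definition lpm_bases :: "nat \<Rightarrow> nat \<Rightarrow> bool list \<Rightarrow> bool list \<Rightarrow> nat set set" where
  "lpm_bases m r P Q = {B. B \<subseteq> {1..m+r} \<and> card B = r \<and> stays_between P Q (path_of (m+r) B)}"

text \<open>Matroid base polytope, with coordinates of R^{m+r} indexed via a bijection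
  coord from {1..m+r} onto the finite index type 'n.\<close>
definition lpm_polytope :: "nat \<Rightarrow> nat \<Rightarrow> bool list \<Rightarrow> bool list \<Rightarrow> (nat \<Rightarrow> 'n::finite) \<Rightarrow> (real ^ 'n) set" where
  "lpm_polytope m r P Q coord =
     convex hull ((\<lambda>B. \<Sum>b\<in>B. axis (coord b) 1) ` lpm_bases m r P Q)"

text \<open>Heights of the East steps: the i-th entry (0-based) is the y-coordinate of
  the East step going from x = i to x = i+1.\<close>
fun east_heights :: "bool list \<Rightarrow> nat \<Rightarrow> nat list" where
  "east_heights [] h = []"
| "east_heights (True # xs) h = east_heights xs (Suc h)"
| "east_heights (False # xs) h = h # east_heights xs h"

text \<open>Unit cells [i,i+1] x [j,j+1] of the region bounded by P (below) and Q (above).\<close>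
definition region_cells :: "nat \<Rightarrow> bool list \<Rightarrow> bool list \<Rightarrow> (nat \<times> nat) set" where
  "region_cells m P Q = {(i, j). i < m \<and> east_heights P 0 ! i \<le> j \<and> j < east_heights Q 0 ! i}"

definition cell_adj :: "(nat \<times> nat) set \<Rightarrow> ((nat \<times> nat) \<times> (nat \<times> nat)) set" where
  "cell_adj S = {((i, j), (i', j')). (i, j) \<in> S \<and> (i', j') \<in> S \<and>
      ((i' = Suc i \<or> i = Suc i') \<and> j = j' \<or> (j' = Suc j \<or> j = Suc j') \<and> i = i')}"

definition border_strip :: "(nat \<times> nat) set \<Rightarrow> bool" where
  "border_strip S \<longleftrightarrow> finite S \<and> S \<noteq> {} \<and>
     (\<forall>a\<in>S. \<forall>b\<in>S. (a, b) \<in> (cell_adj S)\<^sup>*) \<and>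
     \<not> (\<exists>i j. (i, j) \<in> S \<and> (Suc i, j) \<in> S \<and> (i, Suc j) \<in> S \<and> (Suc i, Suc j) \<in> S)"

text \<open>Outside corners: NE corners of P and EN corners of Q (as lattice points).\<close>
definition outside_corners :: "bool list \<Rightarrow> bool list \<Rightarrow> (nat \<times> nat) set" where
  "outside_corners P Q =
     {pt P k | k. 0 < k \<and> k < length P \<and> P ! (k - 1) \<and> \<not> P ! k} \<union>
     {pt Q k | k. 0 < k \<and> k < length Q \<and> \<not> Q ! (k - 1) \<and> Q ! k}"

end

theory Submission
  imports Defs
begin

text \<open>
  Since the region contains no 2\<times>2 square, the upper path runs exactly one unit above the lower
  path P at every interior step. Hence, with h the height function of P, the bases are the sets B
  with h k \<le> |B \<inter> {1..k}| \<le> h k + 1. In the coordinates t k = x_1 + \<dots> + x_k - h k the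
  polytope becomes {t. t 0 = t n = 0, t weakly decreases along North steps and weakly increases
  along East steps of P, 0 \<le> t \<le> 1}. Its extreme points are 0/1-valued, i.e. bases, and the
  bounds 0 \<le> t k \<le> 1 are only needed where t can attain a local minimum resp. maximum. The
  remaining system of n - 2 step inequalities and these bounds is irredundant, so it counts the
  facets. Interior local minima are NE corners of P, interior local maxima are EN corners of the
  upper path, and the two endpoints contribute two further bounds: n + d facets.
\<close>

lemma card_facets_irredundant:
  fixes a :: "'i \<Rightarrow> 'a::euclidean_space" and b :: "'i \<Rightarrow> real"
  assumes fin: "finite I"
    and S_eq: "S = affine hull S \<inter> (\<Inter>i\<in>I. {x. a i \<bullet> x \<le> b i})"
    and nonzero: "\<And>i. i \<in> I \<Longrightarrow> a i \<noteq> 0"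
    and irredundant: "\<And>j. j \<in> I \<Longrightarrow>
       \<exists>w \<in> affine hull S. w \<notin> S \<and> (\<forall>i \<in> I - {j}. a i \<bullet> w \<le> b i)"
    and distinct: "inj_on (\<lambda>i. S \<inter> {x. a i \<bullet> x = b i}) I"
  shows "card {C. C facet_of S} = card I"
proof -
  define hs where "hs i = {x. a i \<bullet> x \<le> b i}" for i
  have hs_inj: "inj_on hs I"
  proof (rule inj_onI, rule ccontr)
    fix i j assume ij: "i \<in> I" "j \<in> I" "hs i = hs j" "i \<noteq> j"
    obtain w where w: "w \<in> affine hull S" "w \<notin> S" "\<forall>k \<in> I - {j}. a k \<bullet> w \<le> b k"
      using irredundant[OF ij(2)] by blast
    then have "w \<in> hs j" using ij by (auto simp: hs_def)
    then have "w \<in> (\<Inter>k\<in>I. {x. a k \<bullet> x \<le> b k})" using w(3) by (auto simp: hs_def)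
    then show False using w(1,2) S_eq by blast
  qed
  define idx where "idx = the_inv_into I hs"
  have idx: "idx (hs i) = i" if "i \<in> I" for i
    using the_inv_into_f_f[OF hs_inj that] by (simp add: idx_def)
  have facets: "C facet_of S \<longleftrightarrow> (\<exists>h \<in> hs ` I. C = S \<inter> {x. a (idx h) \<bullet> x = b (idx h)})" for C
  proof -
    have "C facet_of S \<longleftrightarrow> (\<exists>h. h \<in> hs ` I \<and> C = S \<inter> {x. a (idx h) \<bullet> x = b (idx h)})"
    proof (rule facet_of_polyhedron_explicit)
      show "finite (hs ` I)" using fin by simp
      show "S = affine hull S \<inter> \<Inter> (hs ` I)" using S_eq by (simp add: hs_def)
      show "a (idx h) \<noteq> 0 \<and> h = {x. a (idx h) \<bullet> x \<le> b (idx h)}" if h: "h \<in> hs ` I" for h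
      proof -
        obtain i where "i \<in> I" "h = hs i" using h by blast
        moreover from this have "idx h = i" by (simp add: idx)
        ultimately show ?thesis using nonzero by (simp add: hs_def)
      qed
    next
      fix F' assume F': "F' \<subset> hs ` I"
      then obtain j where j: "j \<in> I" "hs j \<notin> F'" by blast
      obtain w where w: "w \<in> affine hull S" "w \<notin> S" "\<forall>k \<in> I - {j}. a k \<bullet> w \<le> b k"
        using irredundant[OF j(1)] by blast
      have w_in: "w \<in> \<Inter> F'" using F' j w(3) by (auto simp: hs_def)
      have "S \<subseteq> \<Inter> (hs ` I)" by (subst S_eq) (auto simp: hs_def)
      moreover have "\<Inter> (hs ` I) \<subseteq> \<Inter> F'" using F' by (intro Inter_anti_mono) blast
      ultimately have "S \<subseteq> affine hull S \<inter> \<Inter> F'" using hull_subset[of S affine] by blast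
      then show "S \<subset> affine hull S \<inter> \<Inter> F'" using w(1,2) w_in by blast
    qed
    then show ?thesis by blast
  qed
  have "{C. C facet_of S} = (\<lambda>i. S \<inter> {x. a i \<bullet> x = b i}) ` I"
    unfolding facets by (auto simp: idx)
  then show ?thesis using card_image[OF distinct] by simp
qed

text \<open>
  In the coordinates x of the polytope: Step k is 0 \<le> x_k at an East step and x_k \<le> 1 at a
  North step, Lower k is h k \<le> x_1 + \<dots> + x_k and Upper k is x_1 + \<dots> + x_k \<le> h k + 1.
\<close>
datatype ineq_label = Step (pos: nat) | Lower (pos: nat) | Upper (pos: nat)

text \<open>
  p k says that the k-th step of the lower boundary path is North, and h is its height function;
  the upper boundary path is the lower one raised by one unit between the endpoints.
\<close>

locale snake_polytope =
  fixes n :: nat and p :: "nat \<Rightarrow> bool" and h :: "nat \<Rightarrow> nat"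
    and coord :: "nat \<Rightarrow> 'n::finite"
  assumes two_le_n: "2 \<le> n" and first_east: "\<not> p 1" and last_north: "p n"
    and h_0: "h 0 = 0" and h_Suc: "\<And>k. k < n \<Longrightarrow> h (Suc k) = h k + of_bool (p (Suc k))"
    and coord: "bij_betw coord {1..n} (UNIV :: 'n set)"
begin

definition e :: "nat \<Rightarrow> real^'n" where "e k = axis (coord k) 1"

definition component :: "real^'n \<Rightarrow> nat \<Rightarrow> real" where "component x k = x $ coord k"

definition partial_sum :: "real^'n \<Rightarrow> nat \<Rightarrow> real" where
  "partial_sum x k = (\<Sum>i=1..k. component x i)"

definition excess :: "real^'n \<Rightarrow> nat \<Rightarrow> real" where
  "excess x k = partial_sum x k - real (h k)"

definition point_of :: "(nat \<Rightarrow> real) \<Rightarrow> real^'n" where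
  "point_of t = (\<Sum>k=1..n. (t k - t (k - 1) + of_bool (p k)) *\<^sub>R e k)"

lemma component_eqI: "(\<And>k. k \<in> {1..n} \<Longrightarrow> component x k = component y k) \<Longrightarrow> x = y"
  using coord unfolding vec_eq_iff component_def bij_betw_def
  by (metis UNIV_I atLeastAtMost_iff imageE)

lemma component_e: "i \<in> {1..n} \<Longrightarrow> k \<in> {1..n} \<Longrightarrow> component (e i) k = of_bool (i = k)"
  using coord unfolding component_def e_def axis_def bij_betw_def by (auto dest: inj_onD)

lemma component_sum: "component (\<Sum>i\<in>A. f i) k = (\<Sum>i\<in>A. component (f i) k)"
  unfolding component_def by (induction A rule: infinite_finite_induct) auto

lemma component_midpoint: "component (midpoint x y) k = (component x k + component y k) / 2"
  by (simp add: midpoint_def component_def)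

lemma inner_e: "e k \<bullet> x = component x k"
  by (simp add: e_def component_def inner_axis')

lemma inner_sum_e: "(\<Sum>i\<in>A. e i) \<bullet> x = (\<Sum>i\<in>A. component x i)"
  by (simp add: inner_sum_left inner_e)

lemma component_combination:
  assumes "k \<in> {1..n}"
  shows "component (\<Sum>i=1..n. c i *\<^sub>R e i) k = c k"
proof -
  have "component (\<Sum>i=1..n. c i *\<^sub>R e i) k = (\<Sum>i=1..n. if i = k then c i else 0)"
    using assms component_e by (intro trans[OF component_sum sum.cong]) (auto simp: component_def)
  then show ?thesis using assms by simp
qed

lemma component_point_of: "k \<in> {1..n} \<Longrightarrow> component (point_of t) k = t k - t (k - 1) + of_bool (p k)"
  unfolding point_of_def by (rule component_combination)

lemma excess_0 [simp]: "excess x 0 = 0"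
  by (simp add: excess_def partial_sum_def h_0)

lemma component_excess:
  assumes "k \<in> {1..n}"
  shows "component x k = excess x k - excess x (k - 1) + of_bool (p k)"
proof -
  obtain j where "k = Suc j" "j < n" using assms by (cases k) auto
  then show ?thesis using h_Suc[of j] by (simp add: excess_def partial_sum_def)
qed

lemma excess_point_of: "t 0 = 0 \<Longrightarrow> k \<le> n \<Longrightarrow> excess (point_of t) k = t k"
proof (induction k)
  case (Suc k)
  then show ?case
    using component_point_of[of "Suc k" t] h_Suc[of k]
    by (simp add: excess_def partial_sum_def)
qed simp

lemma point_of_excess: "point_of (excess x) = x"
proof (rule component_eqI)
  fix k assume k: "k \<in> {1..n}"
  show "component (point_of (excess x)) k = component x k"
    unfolding component_point_of[OF k] component_excess[OF k, of x] ..
qed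

definition step_ineq :: "nat \<Rightarrow> (nat \<Rightarrow> real) \<Rightarrow> bool" where
  "step_ineq k t \<longleftrightarrow> (if p k then t k \<le> t (k - 1) else t (k - 1) \<le> t k)"

definition local_min :: "nat \<Rightarrow> bool" where
  "local_min k \<longleftrightarrow> (k = 1 \<or> p k) \<and> (k = n - 1 \<or> \<not> p (Suc k))"

definition local_max :: "nat \<Rightarrow> bool" where
  "local_max k \<longleftrightarrow> \<not> p k \<and> p (Suc k)"

definition labels :: "ineq_label set" where
  "labels = Step ` {2..n-1} \<union> Lower ` {k \<in> {1..n-1}. local_min k} \<union>
     Upper ` {k \<in> {1..n-1}. local_max k}"

fun holds :: "ineq_label \<Rightarrow> (nat \<Rightarrow> real) \<Rightarrow> bool" where
  "holds (Step k) t \<longleftrightarrow> step_ineq k t"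
| "holds (Lower k) t \<longleftrightarrow> 0 \<le> t k"
| "holds (Upper k) t \<longleftrightarrow> t k \<le> 1"

definition feasible :: "(nat \<Rightarrow> real) \<Rightarrow> bool" where
  "feasible t \<longleftrightarrow> t 0 = 0 \<and> t n = 0 \<and> (\<forall>c \<in> labels. holds c t)"

lemma feasible_iff:
  "feasible t \<longleftrightarrow> t 0 = 0 \<and> t n = 0 \<and> (\<forall>k \<in> {2..n-1}. step_ineq k t) \<and>
     (\<forall>k \<in> {1..n-1}. local_min k \<longrightarrow> 0 \<le> t k) \<and> (\<forall>k \<in> {1..n-1}. local_max k \<longrightarrow> t k \<le> 1)"
  unfolding feasible_def labels_def ball_Un by auto

lemma labels_pos: "c \<in> labels \<Longrightarrow> pos c \<in> {1..n}"
  by (auto simp: labels_def)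

lemma labels_cases:
  assumes "c \<in> labels"
  obtains (Step) k where "c = Step k" "k \<in> {2..n-1}"
    | (Lower) k where "c = Lower k" "k \<in> {1..n-1}" "local_min k"
    | (Upper) k where "c = Upper k" "k \<in> {1..n-1}" "local_max k"
  using assms unfolding labels_def by auto

lemma holds_cong: "c \<in> labels \<Longrightarrow> (\<And>k. k \<le> n \<Longrightarrow> t k = u k) \<Longrightarrow> holds c t = holds c u"
  by (erule labels_cases) (auto simp: step_ineq_def)

lemma feasible_cong: "(\<And>k. k \<le> n \<Longrightarrow> t k = u k) \<Longrightarrow> feasible t = feasible u"
  unfolding feasible_def using holds_cong by (metis le0 order_refl)

lemma feasible_nonneg:
  assumes t: "feasible t" and k: "k \<in> {1..n-1}"
  shows "0 \<le> t k"
proof -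
  have to_min: "0 \<le> t k" if "n - 1 - k = d" "k \<in> {1..n-1}" "k = 1 \<or> p k" for d k
    using that
  proof (induction d arbitrary: k)
    case 0
    then have "local_min k" by (auto simp: local_min_def)
    then show ?case using t 0 by (auto simp: feasible_iff)
  next
    case (Suc d)
    show ?case
    proof (cases "local_min k")
      case True then show ?thesis using t Suc by (auto simp: feasible_iff)
    next
      case False
      then have "p (Suc k)" "Suc k \<in> {2..n-1}" using Suc.prems by (auto simp: local_min_def)
      then have "step_ineq (Suc k) t" using t by (simp add: feasible_iff)
      then have "t (Suc k) \<le> t k" using \<open>p (Suc k)\<close> by (simp add: step_ineq_def)
      moreover have "0 \<le> t (Suc k)" using Suc.IH[of "Suc k"] Suc.prems \<open>p (Suc k)\<close> by auto
      ultimately show ?thesis by linarith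
    qed
  qed
  show ?thesis using k
  proof (induction k)
    case (Suc k)
    show ?case
    proof (cases "Suc k = 1 \<or> p (Suc k)")
      case True then show ?thesis using to_min Suc.prems by blast
    next
      case False
      then have "Suc k \<in> {2..n-1}" "k \<in> {1..n-1}" using Suc.prems by auto
      then have "step_ineq (Suc k) t" using t by (simp add: feasible_iff)
      then have "t k \<le> t (Suc k)" using False by (simp add: step_ineq_def)
      then show ?thesis using Suc.IH \<open>k \<in> {1..n-1}\<close> by linarith
    qed
  qed simp
qed

lemma feasible_le_one:
  assumes t: "feasible t" and k: "k \<in> {1..n-1}"
  shows "t k \<le> 1"
proof -
  have to_max: "t k \<le> 1" if "n - 1 - k = d" "k \<in> {1..n-1}" "\<not> p k" for d k
    using that
  proof (induction d arbitrary: k)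
    case 0
    then have "Suc k = n" using two_le_n by auto
    then have "local_max k" using 0 last_north by (auto simp: local_max_def)
    then show ?case using t 0 by (auto simp: feasible_iff)
  next
    case (Suc d)
    show ?case
    proof (cases "local_max k")
      case True then show ?thesis using t Suc by (auto simp: feasible_iff)
    next
      case False
      then have "\<not> p (Suc k)" using Suc.prems by (auto simp: local_max_def)
      then have "Suc k \<in> {2..n-1}" using Suc.prems last_north by (cases "Suc k = n") auto
      then have "step_ineq (Suc k) t" using t by (simp add: feasible_iff)
      then have "t k \<le> t (Suc k)" using \<open>\<not> p (Suc k)\<close> by (simp add: step_ineq_def)
      moreover have "t (Suc k) \<le> 1"
        using Suc.IH[of "Suc k"] Suc.prems \<open>\<not> p (Suc k)\<close> \<open>Suc k \<in> {2..n-1}\<close> by auto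
      ultimately show ?thesis by linarith
    qed
  qed
  show ?thesis using k
  proof (induction k)
    case (Suc k)
    show ?case
    proof (cases "p (Suc k)")
      case False then show ?thesis using to_max Suc.prems by blast
    next
      case True
      then have "Suc k \<in> {2..n-1}" "k \<in> {1..n-1}" using Suc.prems first_east by (cases k; auto)+
      then have "step_ineq (Suc k) t" using t by (simp add: feasible_iff)
      then have "t (Suc k) \<le> t k" using True by (simp add: step_ineq_def)
      then show ?thesis using Suc.IH \<open>k \<in> {1..n-1}\<close> by linarith
    qed
  qed simp
qed

lemma feasible_step_ineq:
  assumes t: "feasible t" and k: "k \<in> {1..n}"
  shows "step_ineq k t"
proof -
  have "0 \<le> t 1" "0 \<le> t (n - 1)" using feasible_nonneg[OF t] two_le_n by auto
  moreover have "t 0 = 0" "t n = 0" "k \<noteq> 1 \<Longrightarrow> k \<noteq> n \<Longrightarrow> step_ineq k t"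
    using t k by (auto simp: feasible_iff)
  ultimately show ?thesis using first_east last_north
    by (cases "k = 1"; cases "k = n") (auto simp: step_ineq_def)
qed

fun normal :: "ineq_label \<Rightarrow> real^'n" where
  "normal (Step k) = (if p k then e k else - e k)"
| "normal (Lower k) = - (\<Sum>i=1..k. e i)"
| "normal (Upper k) = (\<Sum>i=1..k. e i)"

fun offset :: "ineq_label \<Rightarrow> real" where
  "offset (Step k) = of_bool (p k)"
| "offset (Lower k) = - real (h k)"
| "offset (Upper k) = real (h k) + 1"

fun tight :: "ineq_label \<Rightarrow> (nat \<Rightarrow> real) \<Rightarrow> bool" where
  "tight (Step k) t \<longleftrightarrow> t k = t (k - 1)"
| "tight (Lower k) t \<longleftrightarrow> t k = 0"
| "tight (Upper k) t \<longleftrightarrow> t k = 1"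

lemma tight_cong: "c \<in> labels \<Longrightarrow> (\<And>k. k \<le> n \<Longrightarrow> t k = u k) \<Longrightarrow> tight c t = tight c u"
  by (erule labels_cases) auto

definition halfspace :: "ineq_label \<Rightarrow> (real^'n) set" where
  "halfspace c = {x. normal c \<bullet> x \<le> offset c}"

definition ineq_polytope :: "(real^'n) set" where
  "ineq_polytope = {x. partial_sum x n = h n} \<inter> (\<Inter>c \<in> labels. halfspace c)"

lemma partial_sum_eq_inner: "partial_sum x k = (\<Sum>i=1..k. e i) \<bullet> x"
  by (simp add: inner_sum_e partial_sum_def)

lemma inner_normal:
  "normal (Step k) \<bullet> x = (if p k then component x k else - component x k)"
  "normal (Lower k) \<bullet> x = - partial_sum x k"
  "normal (Upper k) \<bullet> x = partial_sum x k"
  by (simp_all add: inner_e partial_sum_eq_inner)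

lemma normal_inner_le_iff:
  assumes "c \<in> labels"
  shows "normal c \<bullet> x \<le> offset c \<longleftrightarrow> holds c (excess x)"
  using assms component_excess[OF labels_pos[OF assms], of x]
  by (cases rule: labels_cases)
    (auto simp del: normal.simps simp: inner_normal excess_def step_ineq_def)

lemma normal_inner_eq_iff:
  assumes "c \<in> labels"
  shows "normal c \<bullet> x = offset c \<longleftrightarrow> tight c (excess x)"
  using assms component_excess[OF labels_pos[OF assms], of x]
  by (cases rule: labels_cases) (auto simp del: normal.simps simp: inner_normal excess_def)

lemma mem_ineq_polytope_iff: "x \<in> ineq_polytope \<longleftrightarrow> feasible (excess x)"
  unfolding ineq_polytope_def feasible_def halfspace_def
  by (auto simp: normal_inner_le_iff excess_def[of _ n])

lemma point_of_mem_ineq_polytope: "feasible t \<Longrightarrow> point_of t \<in> ineq_polytope"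
  using feasible_cong[of "excess (point_of t)" t] excess_point_of
  by (simp add: mem_ineq_polytope_iff feasible_def)

lemma convex_ineq_polytope: "convex ineq_polytope"
  unfolding ineq_polytope_def halfspace_def partial_sum_eq_inner
  by (intro convex_Int convex_hyperplane convex_INT convex_halfspace_le)

lemma feasible_component_bounds:
  assumes t: "feasible (excess x)" and k: "k \<in> {1..n}"
  shows "0 \<le> component x k \<and> component x k \<le> 1"
proof -
  have "step_ineq k (excess x)" using feasible_step_ineq[OF t k] .
  moreover have "0 \<le> excess x k" "excess x k \<le> 1" if "k < n"
    using feasible_nonneg[OF t] feasible_le_one[OF t] that k by auto
  moreover have "0 \<le> excess x (k - 1)" "excess x (k - 1) \<le> 1" if "k > 1"
  proof -
    have "k - 1 \<in> {1..n-1}" using that k by auto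
    then show "0 \<le> excess x (k - 1)" "excess x (k - 1) \<le> 1"
      using feasible_nonneg[OF t] feasible_le_one[OF t] by auto
  qed
  moreover have "excess x n = 0" using t by (simp add: feasible_def)
  ultimately show ?thesis
    using component_excess[OF k, of x] first_east last_north k two_le_n
    by (cases "k = 1"; cases "k = n") (auto simp: step_ineq_def)
qed

lemma compact_ineq_polytope: "compact ineq_polytope"
proof -
  have "closed ineq_polytope"
    unfolding ineq_polytope_def halfspace_def partial_sum_eq_inner
    by (intro closed_Int closed_hyperplane closed_INT ballI closed_halfspace_le)
  moreover have "norm x \<le> real CARD('n)" if "x \<in> ineq_polytope" for x
  proof -
    have bound: "\<bar>x $ j\<bar> \<le> 1" for j
    proof -
      obtain k where "k \<in> {1..n}" "j = coord k"
        using coord by (metis bij_betw_iff_bijections UNIV_I)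
      then show ?thesis using feasible_component_bounds that
        by (fastforce simp: mem_ineq_polytope_iff component_def)
    qed
    have "(\<Sum>j\<in>UNIV. \<bar>x $ j\<bar>) \<le> (\<Sum>j\<in>(UNIV :: 'n set). 1)" by (rule sum_mono) (rule bound)
    then show ?thesis using norm_le_l1_cart[of x] by simp
  qed
  then have "bounded ineq_polytope" by (auto simp: bounded_iff)
  ultimately show ?thesis by (simp add: compact_eq_bounded_closed)
qed

definition strip_bases :: "nat set set" where
  "strip_bases = {B. B \<subseteq> {1..n} \<and> card B = h n \<and>
     (\<forall>k \<in> {1..n-1}. h k \<le> card (B \<inter> {1..k}) \<and> card (B \<inter> {1..k}) \<le> h k + 1)}"

definition incidence :: "nat set \<Rightarrow> real^'n" where
  "incidence B = (\<Sum>b\<in>B. e b)"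

definition base_points :: "(real^'n) set" where
  "base_points = incidence ` strip_bases"

lemma component_incidence:
  assumes B: "B \<subseteq> {1..n}" and k: "k \<in> {1..n}"
  shows "component (incidence B) k = of_bool (k \<in> B)"
proof -
  have "component (incidence B) k = (\<Sum>b\<in>B. if b = k then 1 else 0)"
    unfolding incidence_def component_sum using B k component_e by (intro sum.cong) auto
  then show ?thesis using finite_subset[OF B] by simp
qed

lemma partial_sum_incidence:
  assumes B: "B \<subseteq> {1..n}" and k: "k \<le> n"
  shows "partial_sum (incidence B) k = card (B \<inter> {1..k})"
proof -
  have "partial_sum (incidence B) k = (\<Sum>i\<in>{1..k}. of_bool (i \<in> B))"
    unfolding partial_sum_def using B k component_incidence by (intro sum.cong) auto
  also have "\<dots> = card (B \<inter> {1..k})"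
    by (simp add: of_bool_def sum.If_cases Int_commute)
  finally show ?thesis .
qed

lemma base_points_subset: "base_points \<subseteq> ineq_polytope"
proof
  fix x assume "x \<in> base_points"
  then obtain B where B: "B \<in> strip_bases" and x: "x = incidence B" by (auto simp: base_points_def)
  have B_sub: "B \<subseteq> {1..n}" using B by (simp add: strip_bases_def)
  have excess: "excess x k = card (B \<inter> {1..k}) - real (h k)" if "k \<le> n" for k
    using partial_sum_incidence[OF B_sub that] by (simp add: excess_def x)
  have "feasible (excess x)" unfolding feasible_iff
  proof (intro conjI ballI impI)
    show "excess x n = 0"
      using excess[of n] B Int_absorb2[OF B_sub] by (simp add: strip_bases_def)
  next
    fix k assume k: "k \<in> {2..n-1}"
    then have k': "k \<in> {1..n}" by auto
    then have "component x k \<in> {0, 1}" using component_incidence[OF B_sub] x by simp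
    then show "step_ineq k (excess x)"
      using component_excess[OF k', of x] by (auto simp: step_ineq_def)
  next
    fix k assume "k \<in> {1..n-1}"
    then have "h k \<le> card (B \<inter> {1..k})" "card (B \<inter> {1..k}) \<le> h k + 1"
      using B by (auto simp: strip_bases_def)
    then show "0 \<le> excess x k" "excess x k \<le> 1" using excess[of k] \<open>k \<in> {1..n-1}\<close> by auto
  qed simp
  then show "x \<in> ineq_polytope" by (simp add: mem_ineq_polytope_iff)
qed

lemma binary_feasible_in_base_points:
  assumes t: "feasible t" and binary: "\<And>k. k \<le> n \<Longrightarrow> t k \<in> {0, 1}"
  shows "point_of t \<in> base_points"
proof -
  define x where "x = point_of t"
  have excess: "excess x k = t k" if "k \<le> n" for k
    using excess_point_of t that by (simp add: x_def feasible_def)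
  have component_binary: "component x k \<in> {0, 1}" if k: "k \<in> {1..n}" for k
  proof -
    have "k \<le> n" "k - 1 \<le> n" using k by auto
    then have "t k \<in> {0, 1}" "t (k - 1) \<in> {0, 1}" using binary by blast+
    then show ?thesis using feasible_step_ineq[OF t k]
      by (auto simp: x_def component_point_of[OF k] step_ineq_def)
  qed
  define B where "B = {k \<in> {1..n}. component x k = 1}"
  have B_sub: "B \<subseteq> {1..n}" by (auto simp: B_def)
  have x_eq: "x = incidence B"
  proof (rule component_eqI)
    fix k assume k: "k \<in> {1..n}"
    show "component x k = component (incidence B) k"
      unfolding component_incidence[OF B_sub k] using component_binary[OF k] k by (auto simp: B_def)
  qed
  have card_B: "card (B \<inter> {1..k}) = real (h k) + t k" if "k \<le> n" for k
    using partial_sum_incidence[OF B_sub that] excess[OF that] by (simp add: x_eq excess_def)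
  have "B \<in> strip_bases" unfolding strip_bases_def
  proof (intro CollectI conjI ballI B_sub)
    show "card B = h n" using card_B[of n] t Int_absorb2[OF B_sub] by (simp add: feasible_def)
  next
    fix k assume "k \<in> {1..n-1}"
    then have "k \<le> n" by auto
    then have "t k \<in> {0, 1}" "real (card (B \<inter> {1..k})) = real (h k) + t k"
      using binary card_B by blast+
    then show "h k \<le> card (B \<inter> {1..k})" "card (B \<inter> {1..k}) \<le> h k + 1" by auto
  qed
  then show ?thesis using x_eq by (simp add: x_def base_points_def)
qed

lemma feasible_mono_map:
  assumes t: "feasible t" and f: "mono_on (t ` {..n} \<union> {0, 1}) f" "f 0 = 0" "f 1 = 1"
  shows "feasible (\<lambda>k. f (t k))"
proof -
  have mono: "f u \<le> f v" if "u \<in> t ` {..n} \<union> {0, 1}" "v \<in> t ` {..n} \<union> {0, 1}" "u \<le> v" for u v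
    using f(1) that by (rule mono_onD)
  show ?thesis
    unfolding feasible_iff
  proof (intro conjI ballI impI)
    fix k assume k: "k \<in> {2..n-1}"
    then have "t k \<in> t ` {..n} \<union> {0, 1}" "t (k - 1) \<in> t ` {..n} \<union> {0, 1}" by auto
    moreover have "step_ineq k t" using t k by (simp add: feasible_iff)
    ultimately show "step_ineq k (\<lambda>k. f (t k))" using mono by (auto simp: step_ineq_def)
  next
    fix k assume "k \<in> {1..n-1}"
    show "0 \<le> f (t k)" if "local_min k"
      using t that \<open>k \<in> {1..n-1}\<close> mono[of 0 "t k"] f(2) by (auto simp: feasible_iff)
    show "f (t k) \<le> 1" if "local_max k"
      using t that \<open>k \<in> {1..n-1}\<close> mono[of "t k" 1] f(3) by (auto simp: feasible_iff)
  qed (use t f(2) in \<open>auto simp: feasible_iff\<close>)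
qed

lemma feasible_shift_level:
  assumes t: "feasible t" and c: "0 < c" "c < 1"
  obtains \<epsilon> where "\<epsilon> > 0"
    "feasible (\<lambda>k. if t k = c then c + \<epsilon> else t k)"
    "feasible (\<lambda>k. if t k = c then c - \<epsilon> else t k)"
proof -
  define vals where "vals = t ` {..n} \<union> {0, 1}"
  define \<epsilon> where "\<epsilon> = Min ((\<lambda>v. \<bar>v - c\<bar>) ` (vals - {c}))"
  have finite: "finite ((\<lambda>v. \<bar>v - c\<bar>) ` (vals - {c}))" by (simp add: vals_def)
  have "0 \<in> vals - {c}" using c by (auto simp: vals_def)
  then have \<epsilon>_pos: "\<epsilon> > 0" unfolding \<epsilon>_def by (subst Min_gr_iff[OF finite]) auto
  have \<epsilon>_le: "\<epsilon> \<le> \<bar>v - c\<bar>" if "v \<in> vals" "v \<noteq> c" for v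
    unfolding \<epsilon>_def using that by (intro Min_le[OF finite]) auto
  have shift: "feasible (\<lambda>k. if t k = c then d else t k)" if "\<bar>d - c\<bar> \<le> \<epsilon>" for d
  proof -
    define f where "f v = (if v = c then d else v)" for v
    have "mono_on vals f"
      by (rule mono_onI) (use \<epsilon>_le that in \<open>fastforce simp: f_def\<close>)
    moreover have "f 0 = 0" "f 1 = 1" using c by (auto simp: f_def)
    ultimately have "feasible (\<lambda>k. f (t k))" using feasible_mono_map[OF t] by (simp add: vals_def)
    then show ?thesis by (simp add: f_def)
  qed
  show ?thesis using that[OF \<epsilon>_pos] shift[of "c + \<epsilon>"] shift[of "c - \<epsilon>"] \<epsilon>_pos by simp
qed

lemma extreme_point_binary:
  assumes x: "x extreme_point_of ineq_polytope" and k: "k \<le> n"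
  shows "excess x k \<in> {0, 1}"
proof (rule ccontr)
  assume not_binary: "excess x k \<notin> {0, 1}"
  have t: "feasible (excess x)"
    using x by (simp add: extreme_point_of_def mem_ineq_polytope_iff)
  then have "k \<in> {1..n-1}"
    using k not_binary by (cases "k = 0"; cases "k = n") (auto simp: feasible_def)
  then have c: "0 < excess x k" "excess x k < 1"
    using feasible_nonneg[OF t] feasible_le_one[OF t] not_binary by fastforce+
  obtain \<epsilon> where \<epsilon>: "\<epsilon> > 0"
    and up: "feasible (\<lambda>j. if excess x j = excess x k then excess x k + \<epsilon> else excess x j)"
    and down: "feasible (\<lambda>j. if excess x j = excess x k then excess x k - \<epsilon> else excess x j)"
    using feasible_shift_level[OF t c] by blast
  define up where "up = (\<lambda>j. if excess x j = excess x k then excess x k + \<epsilon> else excess x j)"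
  define down where "down = (\<lambda>j. if excess x j = excess x k then excess x k - \<epsilon> else excess x j)"
  have up_feasible: "feasible up" and down_feasible: "feasible down"
    using up down by (simp_all add: up_def down_def)
  have "excess (point_of up) k \<noteq> excess (point_of down) k"
    using excess_point_of up_feasible down_feasible k \<epsilon>
    by (simp add: feasible_def) (simp add: up_def down_def)
  then have "point_of up \<noteq> point_of down" by auto
  moreover have "point_of up \<in> ineq_polytope" "point_of down \<in> ineq_polytope"
    using point_of_mem_ineq_polytope up_feasible down_feasible by blast+
  moreover have "midpoint (point_of up) (point_of down) = x"
  proof (rule component_eqI)
    fix j assume j: "j \<in> {1..n}"
    have "up i + down i = 2 * excess x i" for i by (simp add: up_def down_def)
    then show "component (midpoint (point_of up) (point_of down)) j = component x j"
      unfolding component_midpoint component_point_of[OF j] component_excess[OF j, of x]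
      by (simp add: field_simps)
  qed
  ultimately show False
    using x midpoint_in_open_segment[of "point_of up" "point_of down"]
    by (auto simp: extreme_point_of_def)
qed

lemma convex_hull_base_points: "convex hull base_points = ineq_polytope"
proof
  show "convex hull base_points \<subseteq> ineq_polytope"
    using base_points_subset convex_ineq_polytope by (rule hull_minimal)
next
  have "{x. x extreme_point_of ineq_polytope} \<subseteq> base_points"
  proof
    fix x assume x: "x \<in> {x. x extreme_point_of ineq_polytope}"
    then have "feasible (excess x)" by (simp add: extreme_point_of_def mem_ineq_polytope_iff)
    then have "point_of (excess x) \<in> base_points"
      using extreme_point_binary x by (intro binary_feasible_in_base_points) auto
    then show "x \<in> base_points" by (simp add: point_of_excess)
  qed
  then show "ineq_polytope \<subseteq> convex hull base_points"
    using Krein_Milman_Minkowski[OF compact_ineq_polytope convex_ineq_polytope] hull_mono by blast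
qed

definition block :: "nat \<Rightarrow> nat \<Rightarrow> nat \<Rightarrow> real" where
  "block a b k = of_bool (a \<le> k \<and> k \<le> b)"

lemma feasible_block:
  assumes "1 \<le> a" "b < n" "\<not> p a" "p (Suc b)"
  shows "feasible (block a b)"
  unfolding feasible_iff
proof (intro conjI ballI impI)
  fix k assume "k \<in> {2..n-1}"
  then show "step_ineq k (block a b)"
    using assms by (cases "k = a"; cases "k = Suc b") (auto simp: step_ineq_def block_def)
qed (use assms in \<open>auto simp: block_def\<close>)

lemma feasible_zero: "feasible (\<lambda>_. 0)"
  by (simp add: feasible_iff step_ineq_def)

definition base :: "real^'n" where
  "base = point_of (\<lambda>_. 0)"

lemma base_in_base_points: "base \<in> base_points"
  unfolding base_def by (rule binary_feasible_in_base_points[OF feasible_zero]) simp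

lemma block_in_base_points:
  "1 \<le> a \<Longrightarrow> b < n \<Longrightarrow> \<not> p a \<Longrightarrow> p (Suc b) \<Longrightarrow> point_of (block a b) \<in> base_points"
  by (rule binary_feasible_in_base_points[OF feasible_block]) (auto simp: block_def)

lemma point_of_minus_base: "point_of t - base = (\<Sum>k=1..n. (t k - t (k - 1)) *\<^sub>R e k)"
  by (simp add: point_of_def base_def sum_subtractf[symmetric] scaleR_diff_left[symmetric])

lemma point_of_block_minus_base:
  assumes "1 \<le> a" "a \<le> b" "b < n"
  shows "point_of (block a b) - base = e a - e (Suc b)"
proof (rule component_eqI)
  fix k assume k: "k \<in> {1..n}"
  have "a \<in> {1..n}" "Suc b \<in> {1..n}" using assms by auto
  then show "component (point_of (block a b) - base) k = component (e a - e (Suc b)) k"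
    unfolding point_of_minus_base component_combination[OF k]
    using assms k component_e[OF _ k] by (auto simp: component_def block_def)
qed

definition directions :: "(real^'n) set" where
  "directions = span ((\<lambda>x. - base + x) ` base_points)"

lemma base_point_minus_base: "v \<in> base_points \<Longrightarrow> v - base \<in> directions"
  unfolding directions_def by (rule span_base) auto

lemma block_direction:
  "1 \<le> a \<Longrightarrow> a \<le> b \<Longrightarrow> b < n \<Longrightarrow> \<not> p a \<Longrightarrow> p (Suc b) \<Longrightarrow> e a - e (Suc b) \<in> directions"
  using base_point_minus_base[OF block_in_base_points] point_of_block_minus_base by metis

lemma adjacent_direction:
  assumes j: "j \<in> {1..n-1}"
  shows "e j - e (Suc j) \<in> directions"
proof -
  have diff: "u - v \<in> directions" if "u \<in> directions" "v \<in> directions" for u v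
    using that unfolding directions_def by (rule span_diff)
  consider "\<not> p j" "p (Suc j)" | "\<not> p j" "\<not> p (Suc j)" | "p j" "p (Suc j)" | "p j" "\<not> p (Suc j)"
    by blast
  then show ?thesis
  proof cases
    case 1
    then show ?thesis using block_direction[of j j] j by auto
  next
    case 2
    then have "e j - e n \<in> directions" "e (Suc j) - e n \<in> directions"
      using block_direction[of j "n - 1"] block_direction[of "Suc j" "n - 1"] j last_north two_le_n
      by (cases "Suc j = n"; auto)+
    from diff[OF this] show ?thesis by simp
  next
    case 3
    then have "e 1 - e (Suc j) \<in> directions" "e 1 - e j \<in> directions"
      using block_direction[of 1 j] block_direction[of 1 "j - 1"] j first_east
      by (cases "j = 1"; auto)+
    from diff[OF this] show ?thesis by simp
  next
    case 4
    then have "j \<noteq> 1" "Suc j \<noteq> n" using first_east last_north by auto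
    then have "e 1 - e n \<in> directions" "e 1 - e j \<in> directions" "e (Suc j) - e n \<in> directions"
      using block_direction[of 1 "n - 1"] block_direction[of 1 "j - 1"]
        block_direction[of "Suc j" "n - 1"] j 4 first_east last_north two_le_n by auto
    from diff[OF diff[OF this(1,2)] this(3)] show ?thesis by (simp add: algebra_simps)
  qed
qed

lemma point_of_in_affine_hull:
  assumes t0: "t 0 = 0" and tn: "t n = 0"
  shows "point_of t \<in> affine hull base_points"
proof -
  define partial where "partial k = (\<Sum>i=1..k. (t i - t (i - 1)) *\<^sub>R e i)" for k
  have partial: "partial k - t k *\<^sub>R e k \<in> directions" if "k \<le> n" for k
    using that
  proof (induction k)
    case 0
    then show ?case by (simp add: partial_def t0 directions_def span_zero)
  next
    case (Suc k)
    have "partial (Suc k) = partial k + (t (Suc k) - t k) *\<^sub>R e (Suc k)"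
      by (simp add: partial_def)
    then have "partial (Suc k) - t (Suc k) *\<^sub>R e (Suc k) =
        (partial k - t k *\<^sub>R e k) + t k *\<^sub>R (e k - e (Suc k))"
      by (simp add: scaleR_diff_left scaleR_diff_right)
    moreover have "t k *\<^sub>R (e k - e (Suc k)) \<in> directions"
    proof (cases "k = 0")
      case True
      then show ?thesis by (simp add: t0 directions_def span_zero)
    next
      case False
      then have "e k - e (Suc k) \<in> directions" using Suc.prems by (intro adjacent_direction) auto
      then show ?thesis unfolding directions_def by (rule span_mul)
    qed
    ultimately show ?case using Suc unfolding directions_def by (simp add: span_add)
  qed
  have "- base + point_of t = partial n"
    by (simp add: point_of_minus_base partial_def)
  then have "- base + point_of t \<in> directions" using partial[of n] tn by simp
  then have "point_of t \<in> (\<lambda>x. base + x) ` directions"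
    by (rule rev_image_eqI) simp
  then show ?thesis
    unfolding directions_def affine_hull_span_gen[OF hull_inc[OF base_in_base_points]] .
qed

fun witness :: "ineq_label \<Rightarrow> nat \<Rightarrow> real" where
  "witness (Step k) j =
     (if 1 \<le> j \<and> j < k then (if p k then 1/3 else 2/3)
      else if k \<le> j \<and> j < n then (if p k then 2/3 else 1/3) else 0)"
| "witness (Lower k) j = (if j = k then - 1/3 else if 1 \<le> j \<and> j < n then 1/2 else 0)"
| "witness (Upper k) j = (if j = k then 4/3 else if 1 \<le> j \<and> j < n then 1/2 else 0)"

lemma witness_boundary: "c \<in> labels \<Longrightarrow> witness c 0 = 0 \<and> witness c n = 0"
  by (erule labels_cases) auto

lemma witness_violates: "c \<in> labels \<Longrightarrow> \<not> holds c (witness c)"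
  by (erule labels_cases) (auto simp: step_ineq_def)

lemma witness_holds_other:
  assumes c: "c \<in> labels" and c': "c' \<in> labels" and ne: "c' \<noteq> c"
  shows "holds c' (witness c)"
  using c
proof (cases rule: labels_cases)
  case (Step k)
  from c' show ?thesis
  proof (cases rule: labels_cases)
    case (Step j)
    then have "j \<noteq> k" using \<open>c = Step k\<close> ne by auto
    then have "witness c j = witness c (j - 1)" using Step \<open>c = Step k\<close> by (cases "j < k") auto
    then show ?thesis using Step by (simp add: step_ineq_def)
  qed (use \<open>c = Step k\<close> in auto)
next
  case (Lower k)
  from c' show ?thesis
  proof (cases rule: labels_cases)
    case (Step j)
    consider "j = k" | "j = Suc k" | "j \<noteq> k" "j \<noteq> Suc k" by blast
    then show ?thesis
    proof cases
      case 1
      then have "p k" using Step \<open>local_min k\<close> by (auto simp: local_min_def)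
      then show ?thesis using 1 Step \<open>c = Lower k\<close> by (simp add: step_ineq_def)
    next
      case 2
      then have "\<not> p j" using Step \<open>local_min k\<close> by (auto simp: local_min_def)
      then show ?thesis using 2 Step \<open>c = Lower k\<close> by (simp add: step_ineq_def)
    qed (use Step \<open>c = Lower k\<close> in \<open>auto simp: step_ineq_def\<close>)
  qed (use \<open>c = Lower k\<close> ne in auto)
next
  case (Upper k)
  from c' show ?thesis
  proof (cases rule: labels_cases)
    case (Step j)
    consider "j = k" | "j = Suc k" | "j \<noteq> k" "j \<noteq> Suc k" by blast
    then show ?thesis
    proof cases
      case 1
      then have "\<not> p k" using \<open>local_max k\<close> by (auto simp: local_max_def)
      then show ?thesis using 1 Step \<open>c = Upper k\<close> by (simp add: step_ineq_def)
    next
      case 2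
      then have "p j" using \<open>local_max k\<close> by (auto simp: local_max_def)
      then show ?thesis using 2 Step \<open>c = Upper k\<close> by (simp add: step_ineq_def)
    qed (use Step \<open>c = Upper k\<close> in \<open>auto simp: step_ineq_def\<close>)
  qed (use \<open>c = Upper k\<close> ne in auto)
qed

lemma witness_point:
  assumes c: "c \<in> labels"
  shows "point_of (witness c) \<in> affine hull base_points"
    and "point_of (witness c) \<notin> halfspace c"
    and "\<And>c'. c' \<in> labels \<Longrightarrow> c' \<noteq> c \<Longrightarrow> point_of (witness c) \<in> halfspace c'"
proof -
  have excess: "excess (point_of (witness c)) k = witness c k" if "k \<le> n" for k
    using excess_point_of witness_boundary[OF c] that by simp
  have holds_iff: "point_of (witness c) \<in> halfspace c' \<longleftrightarrow> holds c' (witness c)"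
    if "c' \<in> labels" for c'
    using normal_inner_le_iff[OF that] holds_cong[OF that excess] by (simp add: halfspace_def)
  show "point_of (witness c) \<in> affine hull base_points"
    using witness_boundary[OF c] by (intro point_of_in_affine_hull) auto
  show "point_of (witness c) \<notin> halfspace c"
    using holds_iff[OF c] witness_violates[OF c] by simp
  show "point_of (witness c) \<in> halfspace c'" if "c' \<in> labels" "c' \<noteq> c" for c'
    using holds_iff[OF that(1)] witness_holds_other[OF c that] by simp
qed

lemma normal_nonzero:
  assumes c: "c \<in> labels"
  shows "normal c \<noteq> 0"
proof
  assume "normal c = 0"
  moreover have "base \<in> halfspace c"
    using base_in_base_points base_points_subset c by (auto simp: ineq_polytope_def)
  ultimately have "halfspace c = UNIV" by (auto simp: halfspace_def split: if_splits)
  then show False using witness_point(2)[OF c] by blast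
qed

lemma tight_separation:
  assumes c: "c \<in> labels" and c': "c' \<in> labels" and ne: "c \<noteq> c'"
  shows "\<exists>t. feasible t \<and> tight c t \<noteq> tight c' t"
proof -
  have full_feasible: "feasible (block 1 (n - 1))"
    using two_le_n first_east last_north by (intro feasible_block) auto
  show ?thesis
    using c
  proof (cases rule: labels_cases)
    case (Step k)
    from c' show ?thesis
    proof (cases rule: labels_cases)
      case (Step j)
      define t where "t = (if p k then block 1 (k - 1) else block k (n - 1))"
      have "feasible t"
        using \<open>k \<in> {2..n-1}\<close> first_east last_north by (auto simp: t_def intro!: feasible_block)
      moreover have "tight c t \<noteq> tight c' t"
        using \<open>c = Step k\<close> \<open>k \<in> {2..n-1}\<close> Step ne by (auto simp: t_def block_def)
      ultimately show ?thesis by blast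
    next
      case (Lower j)
      with \<open>c = Step k\<close> \<open>k \<in> {2..n-1}\<close> show ?thesis
        using full_feasible by (intro exI[of _ "block 1 (n - 1)"]) (auto simp: block_def)
    next
      case (Upper j)
      with \<open>c = Step k\<close> show ?thesis by (intro exI[of _ "\<lambda>_. 0"]) (simp add: feasible_zero)
    qed
  next
    case (Lower k)
    from c' show ?thesis
    proof (cases rule: labels_cases)
      case (Step j)
      with \<open>c = Lower k\<close> \<open>k \<in> {1..n-1}\<close> show ?thesis
        using full_feasible by (intro exI[of _ "block 1 (n - 1)"]) (auto simp: block_def)
    next
      case (Lower j)
      define t where "t = block (Suc (min k j)) (n - 1)"
      have "feasible t" unfolding t_def
        using \<open>c = Lower k\<close> Lower ne \<open>local_min k\<close> \<open>k \<in> {1..n-1}\<close> last_north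
        by (intro feasible_block) (auto simp: local_min_def min_def)
      moreover have "tight c t \<noteq> tight c' t"
        using \<open>c = Lower k\<close> Lower ne \<open>k \<in> {1..n-1}\<close> by (auto simp: t_def block_def min_def)
      ultimately show ?thesis by blast
    next
      case (Upper j)
      with \<open>c = Lower k\<close> show ?thesis by (intro exI[of _ "\<lambda>_. 0"]) (simp add: feasible_zero)
    qed
  next
    case (Upper k)
    from c' show ?thesis
    proof (cases rule: labels_cases)
      case (Upper j)
      have "feasible (block 1 (min k j))"
        using \<open>c = Upper k\<close> Upper \<open>local_max k\<close> \<open>k \<in> {1..n-1}\<close> first_east
        by (intro feasible_block) (auto simp: local_max_def min_def)
      moreover have "tight c (block 1 (min k j)) \<noteq> tight c' (block 1 (min k j))"
        using \<open>c = Upper k\<close> Upper ne \<open>k \<in> {1..n-1}\<close> by (auto simp: block_def min_def)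
      ultimately show ?thesis by blast
    qed (use \<open>c = Upper k\<close> in \<open>intro exI[of _ "\<lambda>_. 0"], simp add: feasible_zero\<close>)+
  qed
qed

lemma finite_labels: "finite labels"
  by (simp add: labels_def)

lemma affine_hull_ineq_polytope: "affine hull ineq_polytope \<subseteq> {x. partial_sum x n = h n}"
  unfolding partial_sum_eq_inner
  by (rule hull_minimal) (auto simp: ineq_polytope_def partial_sum_eq_inner affine_hyperplane)

lemma facets_distinct:
  "inj_on (\<lambda>c. ineq_polytope \<inter> {x. normal c \<bullet> x = offset c}) labels"
proof (rule inj_onI, rule ccontr)
  fix c c' assume c: "c \<in> labels" and c': "c' \<in> labels" and ne: "c \<noteq> c'"
    and eq: "ineq_polytope \<inter> {x. normal c \<bullet> x = offset c} =
      ineq_polytope \<inter> {x. normal c' \<bullet> x = offset c'}"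
  obtain t where t: "feasible t" and tight: "tight c t \<noteq> tight c' t"
    using tight_separation[OF c c' ne] by blast
  have excess: "excess (point_of t) k = t k" if "k \<le> n" for k
    using excess_point_of t that by (simp add: feasible_def)
  have "point_of t \<in> ineq_polytope \<inter> {x. normal d \<bullet> x = offset d} \<longleftrightarrow> tight d t" if "d \<in> labels" for d
    using point_of_mem_ineq_polytope[OF t] normal_inner_eq_iff[OF that] tight_cong[OF that excess]
    by simp
  then show False using eq tight c c' by blast
qed

theorem card_facets: "card {F. F facet_of convex hull base_points} = card labels"
  unfolding convex_hull_base_points
proof (rule card_facets_irredundant[OF finite_labels _ normal_nonzero _ facets_distinct])
  show "ineq_polytope = affine hull ineq_polytope \<inter> (\<Inter>c\<in>labels. {x. normal c \<bullet> x \<le> offset c})"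
    using affine_hull_ineq_polytope hull_subset[of ineq_polytope affine]
    by (auto simp: ineq_polytope_def halfspace_def)
next
  fix c assume c: "c \<in> labels"
  have "ineq_polytope \<subseteq> halfspace c" using c by (auto simp: ineq_polytope_def)
  moreover have "affine hull base_points \<subseteq> affine hull ineq_polytope"
    by (rule hull_mono) (rule base_points_subset)
  ultimately show "\<exists>w \<in> affine hull ineq_polytope. w \<notin> ineq_polytope \<and>
      (\<forall>c' \<in> labels - {c}. normal c' \<bullet> w \<le> offset c')"
    using witness_point[OF c] by (auto simp: halfspace_def)
qed

text \<open>
  Outside corners indexed by the number of steps leading to them. Away from the endpoints the EN
  corners of the upper path are those of the lower one; at the endpoints there are none, since the
  upper path starts North and ends East.
\<close>
definition NE_corners :: "nat set" where
  "NE_corners = {k. 0 < k \<and> k < n \<and> p k \<and> \<not> p (Suc k)}"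

definition EN_corners :: "nat set" where
  "EN_corners = {k. 1 < k \<and> k + 1 < n \<and> \<not> p k \<and> p (Suc k)}"

lemma card_local_extrema_at_ends:
  "card {k \<in> {1, n - 1}. local_min k} + card {k \<in> {1, n - 1}. local_max k} = 2"
proof -
  define mins where "mins = {k \<in> {1, n - 1}. local_min k}"
  define maxs where "maxs = {k \<in> {1, n - 1}. local_max k}"
  have "card mins + card maxs = 2"
  proof (cases "n = 2")
    case True
    have "local_min 1" "local_max 1"
      unfolding local_min_def local_max_def using True first_east last_north
      by (auto simp: numeral_2_eq_2)
    then have "mins = {1}" "maxs = {1}" using True by (auto simp: mins_def maxs_def)
    then show ?thesis by simp
  next
    case False
    then have "mins \<inter> maxs = {}" "mins \<union> maxs = {1, n - 1}" "card {1, n - 1} = 2"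
      using two_le_n first_east last_north
      by (auto simp: mins_def maxs_def local_min_def local_max_def)
    moreover have "finite mins" "finite maxs" by (simp_all add: mins_def maxs_def)
    ultimately show ?thesis using card_Un_disjoint[of mins maxs] by simp
  qed
  then show ?thesis by (simp add: mins_def maxs_def)
qed

lemma card_labels: "card labels = n + card NE_corners + card EN_corners"
proof -
  define mins where "mins = {k \<in> {1..n-1}. local_min k}"
  define maxs where "maxs = {k \<in> {1..n-1}. local_max k}"
  define ends where "ends = {1, n - 1}"
  have finite: "finite mins" "finite maxs" "finite NE_corners" "finite EN_corners"
    by (auto simp: mins_def maxs_def NE_corners_def EN_corners_def
        intro: finite_subset[of _ "{..n}"])
  have "card labels = card (Step ` {2..n-1}) + card (Lower ` mins) + card (Upper ` maxs)"
    unfolding labels_def mins_def[symmetric] maxs_def[symmetric] using finite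
    by (subst card_Un_disjoint; auto)+
  also have "\<dots> = (n - 2) + card mins + card maxs"
    by (simp add: card_image inj_on_def)
  finally have labels: "card labels + 2 = n + card mins + card maxs" using two_le_n by simp
  have "mins = NE_corners \<union> (mins \<inter> ends)" "NE_corners \<inter> (mins \<inter> ends) = {}"
    using first_east last_north by (auto simp: mins_def NE_corners_def ends_def local_min_def)
  then have mins: "card mins = card NE_corners + card (mins \<inter> ends)"
    using finite card_Un_disjoint[of NE_corners "mins \<inter> ends"] by (simp add: ends_def)
  have "maxs = EN_corners \<union> (maxs \<inter> ends)" "EN_corners \<inter> (maxs \<inter> ends) = {}"
    using first_east last_north two_le_n
    by (auto simp: maxs_def EN_corners_def ends_def local_max_def)
  then have maxs: "card maxs = card EN_corners + card (maxs \<inter> ends)"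
    using finite card_Un_disjoint[of EN_corners "maxs \<inter> ends"] by (simp add: ends_def)
  have "mins \<inter> ends = {k \<in> {1, n - 1}. local_min k}" "maxs \<inter> ends = {k \<in> {1, n - 1}. local_max k}"
    using two_le_n by (auto simp: mins_def maxs_def ends_def)
  then have "card (mins \<inter> ends) + card (maxs \<inter> ends) = 2"
    using card_local_extrema_at_ends by simp
  then show ?thesis using labels mins maxs by linarith
qed

end

lemma ht_0 [simp]: "ht P 0 = 0"
  by (simp add: ht_def)

lemma ht_Suc: "k < length P \<Longrightarrow> ht P (Suc k) = ht P k + of_bool (P ! k)"
  by (simp add: ht_def take_Suc_conv_app_nth)

lemma ht_le: "ht P k \<le> k"
  using length_filter_le[of id "take k P"] by (simp add: ht_def)

lemma ht_Cons_Suc: "ht (x # xs) (Suc k) = of_bool x + ht xs k"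
  by (simp add: ht_def)

lemma length_filter_Not_take: "k \<le> length P \<Longrightarrow> length (filter Not (take k P)) = k - ht P k"
  using sum_length_filter_compl[of id "take k P"] by (simp add: ht_def)

lemma inj_pt: "inj (pt P)"
  by (rule injI) (metis pt_def ht_le prod.inject le_add_diff_inverse2)

lemma ht_path_of: "k \<le> n \<Longrightarrow> ht (path_of n B) k = card (B \<inter> {1..k})"
proof (induction k)
  case (Suc k)
  have "path_of n B ! k = (Suc k \<in> B)" using Suc.prems by (simp add: path_of_def del: upt_Suc)
  moreover have "B \<inter> {1..Suc k} = (if Suc k \<in> B then insert (Suc k) (B \<inter> {1..k}) else B \<inter> {1..k})"
    by (auto simp: le_Suc_eq)
  ultimately show ?case using Suc ht_Suc[of k "path_of n B"] by (simp add: path_of_def)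
qed simp

lemma length_east_heights: "length (east_heights xs h) = length (filter Not xs)"
  by (induction xs h rule: east_heights.induct) auto

lemma east_heights_ge: "i < length (east_heights xs h) \<Longrightarrow> h \<le> east_heights xs h ! i"
proof (induction xs h arbitrary: i rule: east_heights.induct)
  case (2 xs h) then show ?case by fastforce
next
  case (3 xs h) then show ?case by (cases i) auto
qed simp

lemma east_heights_le_ht:
  "i < length (filter Not (take k xs)) \<Longrightarrow> east_heights xs h ! i \<le> h + ht xs k"
proof (induction xs h arbitrary: i k rule: east_heights.induct)
  case (2 xs h)
  then obtain k' where "k = Suc k'" by (cases k) auto
  then show ?case using 2 by (auto simp: ht_Cons_Suc)
next
  case (3 xs h)
  then obtain k' where "k = Suc k'" by (cases k) auto
  then show ?case using 3 by (cases i) (auto simp: ht_Cons_Suc)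
qed simp

lemma ht_le_east_heights:
  "length (filter Not (take k xs)) \<le> i \<Longrightarrow> i < length (filter Not xs) \<Longrightarrow>
    h + ht xs k \<le> east_heights xs h ! i"
proof (induction xs h arbitrary: i k rule: east_heights.induct)
  case (2 xs h)
  then show ?case
    using east_heights_ge[of i "True # xs" h]
    by (cases k) (auto simp: length_east_heights ht_Cons_Suc)
next
  case (3 xs h)
  show ?case
  proof (cases k)
    case 0
    then show ?thesis
      using east_heights_ge[of i "False # xs" h] 3 by (simp add: length_east_heights)
  next
    case (Suc k')
    then obtain i' where "i = Suc i'" using 3 by (cases i) auto
    then show ?thesis using 3 Suc by (auto simp: ht_Cons_Suc)
  qed
qed simp

lemma lattice_path_east_steps: "lattice_path m r P \<Longrightarrow> length (filter Not P) = m"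
  using sum_length_filter_compl[of id P] by (simp add: lattice_path_def)

lemma lattice_path_ht_end: "lattice_path m r P \<Longrightarrow> ht P (m + r) = r"
  by (simp add: lattice_path_def ht_def)

lemma region_cells_nonempty_two_le:
  assumes Q: "lattice_path m r Q" and ne: "region_cells m P Q \<noteq> {}"
  shows "2 \<le> m + r"
proof -
  obtain i j where "i < m" "j < east_heights Q 0 ! i" using ne by (auto simp: region_cells_def)
  moreover have "i < length (filter Not (take (m + r) Q))"
    using \<open>i < m\<close> Q lattice_path_east_steps[OF Q] by (simp add: lattice_path_def)
  then have "east_heights Q 0 ! i \<le> r"
    using east_heights_le_ht[of i "m + r" Q 0] lattice_path_ht_end[OF Q] by simp
  ultimately show ?thesis by linarith
qed

text \<open>
  A gap of two units at step k would put a 2\<times>2 square into the two columns just left of the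
  position of P after k steps.
\<close>
lemma border_strip_height_gap:
  assumes P: "lattice_path m r P" and Q: "lattice_path m r Q"
    and below: "\<And>k. 0 < k \<Longrightarrow> k < m + r \<Longrightarrow> ht P k < ht Q k"
    and strip: "border_strip (region_cells m P Q)"
    and k: "0 < k" "k < m + r"
  shows "ht Q k = ht P k + 1"
proof (rule ccontr)
  assume "ht Q k \<noteq> ht P k + 1"
  then have gap: "ht P k + 2 \<le> ht Q k" using below[OF k] by auto
  define a where "a = length (filter Not (take k P))"
  define aQ where "aQ = length (filter Not (take k Q))"
  have "a = k - ht P k" "aQ = k - ht Q k"
    using length_filter_Not_take k P Q by (auto simp: a_def aQ_def lattice_path_def)
  then have "aQ + 2 \<le> a" using gap ht_le[of Q k] by linarith
  have "a \<le> m"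
    using lattice_path_east_steps[OF P] append_take_drop_id[of k P]
    by (metis a_def filter_append le_add1 length_append)
  have cell: "(i, j) \<in> region_cells m P Q"
    if "i \<in> {a - 2, a - 1}" "j \<in> {ht P k, ht P k + 1}" for i j
  proof -
    have i: "i < a" "aQ \<le> i" "i < m" using that \<open>aQ + 2 \<le> a\<close> \<open>a \<le> m\<close> by auto
    have "east_heights P 0 ! i \<le> ht P k" using east_heights_le_ht[of i k P 0] i by (simp add: a_def)
    moreover have "ht Q k \<le> east_heights Q 0 ! i"
      using ht_le_east_heights[of k Q i 0] i lattice_path_east_steps[OF Q] by (simp add: aQ_def)
    ultimately show ?thesis using that gap i by (auto simp: region_cells_def)
  qed
  have "a - 1 = Suc (a - 2)" using \<open>aQ + 2 \<le> a\<close> by simp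
  then have "(a - 2, ht P k) \<in> region_cells m P Q" "(Suc (a - 2), ht P k) \<in> region_cells m P Q"
    "(a - 2, Suc (ht P k)) \<in> region_cells m P Q" "(Suc (a - 2), Suc (ht P k)) \<in> region_cells m P Q"
    using cell[of "a - 2"] cell[of "a - 1"] by auto
  moreover have "\<not> (\<exists>i j. (i, j) \<in> region_cells m P Q \<and> (Suc i, j) \<in> region_cells m P Q \<and>
      (i, Suc j) \<in> region_cells m P Q \<and> (Suc i, Suc j) \<in> region_cells m P Q)"
    using strip by (simp add: border_strip_def)
  ultimately show False by blast
qed

lemma shifted_path_steps:
  assumes len: "length P = n" "length Q = n" and ends: "ht P n = ht Q n" and n: "2 \<le> n"
    and gap: "\<And>k. 0 < k \<Longrightarrow> k < n \<Longrightarrow> ht Q k = ht P k + 1"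
  shows "\<not> P ! 0" "Q ! 0" "P ! (n - 1)" "\<not> Q ! (n - 1)"
    and "\<And>k. 0 < k \<Longrightarrow> k < n - 1 \<Longrightarrow> Q ! k = P ! k"
proof -
  have step: "ht R (Suc k) = ht R k + of_bool (R ! k)" if "R \<in> {P, Q}" "k < n" for R k
    using ht_Suc[of k R] that len by auto
  have "of_bool (Q ! 0) = of_bool (P ! 0) + (1::nat)"
    using step[of P 0] step[of Q 0] gap[of 1] n by simp
  then show "\<not> P ! 0" "Q ! 0" by (cases "P ! 0"; cases "Q ! 0"; simp)+
  have "Suc (n - 1) = n" using n by simp
  then have "of_bool (P ! (n - 1)) = of_bool (Q ! (n - 1)) + (1::nat)"
    using step[of P "n - 1"] step[of Q "n - 1"] gap[of "n - 1"] ends n by simp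
  then show "P ! (n - 1)" "\<not> Q ! (n - 1)" by (cases "P ! (n - 1)"; cases "Q ! (n - 1)"; simp)+
  show "Q ! k = P ! k" if "0 < k" "k < n - 1" for k
  proof -
    have "of_bool (Q ! k) = (of_bool (P ! k) :: nat)"
      using step[of P k] step[of Q k] gap[of k] gap[of "Suc k"] that by simp
    then show ?thesis by (simp add: of_bool_eq_iff)
  qed
qed

lemma stays_between_path_of_iff:
  assumes len: "length P = n" "length Q = n" and ends: "ht P n = ht Q n"
    and gap: "\<And>k. 0 < k \<Longrightarrow> k < n \<Longrightarrow> ht Q k = ht P k + 1"
    and B: "B \<subseteq> {1..n}" "card B = ht P n"
  shows "stays_between P Q (path_of n B) \<longleftrightarrow>
    (\<forall>k \<in> {1..n-1}. ht P k \<le> card (B \<inter> {1..k}) \<and> card (B \<inter> {1..k}) \<le> ht P k + 1)"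
proof -
  have ht_path: "ht (path_of n B) k = card (B \<inter> {1..k})" if "k \<le> n" for k
    using ht_path_of[OF that] .
  have boundary: "ht P k \<le> ht (path_of n B) k \<and> ht (path_of n B) k \<le> ht Q k"
    if "k = 0 \<or> k = n" for k
    using that ht_path[of n] B ends Int_absorb2[OF B(1)] by auto
  have interior: "ht P k \<le> ht (path_of n B) k \<and> ht (path_of n B) k \<le> ht Q k \<longleftrightarrow>
      ht P k \<le> card (B \<inter> {1..k}) \<and> card (B \<inter> {1..k}) \<le> ht P k + 1" if "0 < k" "k < n" for k
    using ht_path[of k] gap[OF that] that by simp
  have len_path: "length (path_of n B) = n" by (simp add: path_of_def)
  show ?thesis
    unfolding stays_between_def len_path
  proof (intro iffI ballI allI impI)
    fix k assume "\<forall>k \<le> n. ht P k \<le> ht (path_of n B) k \<and> ht (path_of n B) k \<le> ht Q k"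
      and "k \<in> {1..n-1}"
    then show "ht P k \<le> card (B \<inter> {1..k}) \<and> card (B \<inter> {1..k}) \<le> ht P k + 1"
      using interior[of k] by auto
  next
    fix k assume "\<forall>k \<in> {1..n-1}. ht P k \<le> card (B \<inter> {1..k}) \<and> card (B \<inter> {1..k}) \<le> ht P k + 1"
      and "k \<le> n"
    then show "ht P k \<le> ht (path_of n B) k \<and> ht (path_of n B) k \<le> ht Q k"
      using boundary[of k] interior[of k] by (cases "k = 0 \<or> k = n") auto
  qed
qed

lemma lpm_bases_shifted:
  assumes len: "length P = m + r" "length Q = m + r" and ends: "ht P (m + r) = ht Q (m + r)"
    and gap: "\<And>k. 0 < k \<Longrightarrow> k < m + r \<Longrightarrow> ht Q k = ht P k + 1"
    and height: "ht P (m + r) = r"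
  shows "lpm_bases m r P Q = {B. B \<subseteq> {1..m + r} \<and> card B = ht P (m + r) \<and>
    (\<forall>k \<in> {1..m + r - 1}. ht P k \<le> card (B \<inter> {1..k}) \<and> card (B \<inter> {1..k}) \<le> ht P k + 1)}"
proof (rule set_eqI)
  fix B
  have "B \<in> lpm_bases m r P Q \<longleftrightarrow>
      B \<subseteq> {1..m + r} \<and> card B = ht P (m + r) \<and> stays_between P Q (path_of (m + r) B)"
    by (simp add: lpm_bases_def height)
  then show "B \<in> lpm_bases m r P Q \<longleftrightarrow> B \<in> {B. B \<subseteq> {1..m + r} \<and> card B = ht P (m + r) \<and>
      (\<forall>k \<in> {1..m + r - 1}. ht P k \<le> card (B \<inter> {1..k}) \<and> card (B \<inter> {1..k}) \<le> ht P k + 1)}"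
    using stays_between_path_of_iff[OF len ends gap] by auto
qed

lemma shifted_EN_corners:
  assumes steps: "Q ! 0" "\<not> Q ! (n - 1)" "\<And>k. 0 < k \<Longrightarrow> k < n - 1 \<Longrightarrow> Q ! k = P ! k"
  shows "{k. 0 < k \<and> k < n \<and> \<not> Q ! (k - 1) \<and> Q ! k} =
    {k. 1 < k \<and> k + 1 < n \<and> \<not> P ! (k - 1) \<and> P ! k}"
proof (rule set_eqI)
  fix k
  show "k \<in> {k. 0 < k \<and> k < n \<and> \<not> Q ! (k - 1) \<and> Q ! k} \<longleftrightarrow>
      k \<in> {k. 1 < k \<and> k + 1 < n \<and> \<not> P ! (k - 1) \<and> P ! k}"
  proof (cases "1 < k \<and> k + 1 < n")
    case True
    then have "0 < k" "k < n - 1" "0 < k - 1" "k - 1 < n - 1" by auto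
    then show ?thesis using True steps(3) by auto
  next
    case False
    have "\<not> (0 < k \<and> k < n \<and> \<not> Q ! (k - 1) \<and> Q ! k)"
    proof
      assume k: "0 < k \<and> k < n \<and> \<not> Q ! (k - 1) \<and> Q ! k"
      with False have "k = 1 \<or> k = n - 1" by auto
      then show False using k steps(1,2) by auto
    qed
    then show ?thesis using False by auto
  qed
qed

lemma card_outside_corners_shifted:
  assumes len: "length P = n" "length Q = n"
    and gap: "\<And>k. 0 < k \<Longrightarrow> k < n \<Longrightarrow> ht Q k = ht P k + 1"
    and steps: "Q ! 0" "\<not> Q ! (n - 1)" "\<And>k. 0 < k \<Longrightarrow> k < n - 1 \<Longrightarrow> Q ! k = P ! k"
  shows "card (outside_corners P Q) =
    card {k. 0 < k \<and> k < n \<and> P ! (k - 1) \<and> \<not> P ! k} +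
    card {k. 1 < k \<and> k + 1 < n \<and> \<not> P ! (k - 1) \<and> P ! k}"
proof -
  define NE where "NE = {k. 0 < k \<and> k < n \<and> P ! (k - 1) \<and> \<not> P ! k}"
  define EN where "EN = {k. 1 < k \<and> k + 1 < n \<and> \<not> P ! (k - 1) \<and> P ! k}"
  have EN_Q: "{k. 0 < k \<and> k < n \<and> \<not> Q ! (k - 1) \<and> Q ! k} = EN"
    unfolding EN_def by (rule shifted_EN_corners[OF steps])
  have corners: "outside_corners P Q = pt P ` NE \<union> pt Q ` EN"
    unfolding outside_corners_def NE_def EN_Q[symmetric] len by blast
  have "pt P ` NE \<inter> pt Q ` EN = {}"
  proof (rule ccontr)
    assume "pt P ` NE \<inter> pt Q ` EN \<noteq> {}"
    then obtain k k' where k: "k \<in> NE" and eq: "pt P k = pt Q k'" by blast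
    have "k - ht P k = k' - ht Q k'" and same_height: "ht P k = ht Q k'"
      using eq unfolding pt_def prod.inject by blast+
    then have "k = k'" using ht_le[of P k] ht_le[of Q k'] by linarith
    then have "ht P k = ht Q k" using same_height by simp
    then show False using gap[of k] k by (simp add: NE_def)
  qed
  moreover have "finite NE" "finite EN"
    by (rule finite_subset[of _ "{..n}"]; auto simp: NE_def EN_def)+
  ultimately show ?thesis
    unfolding corners NE_def[symmetric] EN_def[symmetric]
    by (simp add: card_Un_disjoint card_image inj_on_subset[OF inj_pt])
qed

theorem corollary4p4:
  fixes m r :: nat and P Q :: "bool list" and coord :: "nat \<Rightarrow> 'n::finite"
  assumes "lattice_path m r P" and "lattice_path m r Q"
    and "never_above P Q"
    and "\<forall>k. 0 < k \<and> k < m + r \<longrightarrow> ht P k < ht Q k"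
    and "border_strip (region_cells m P Q)"
    and "bij_betw coord {1..m+r} (UNIV :: 'n set)"
  shows "card {F. F facet_of lpm_polytope m r P Q coord} = m + r + card (outside_corners P Q)"
proof -
  define n where "n = m + r"
  have len: "length P = n" "length Q = n" and height: "ht P n = r" and ends: "ht P n = ht Q n"
    using assms(1,2) lattice_path_ht_end[OF assms(1)] lattice_path_ht_end[OF assms(2)]
    by (auto simp: lattice_path_def n_def)
  have gap: "\<And>k. 0 < k \<Longrightarrow> k < n \<Longrightarrow> ht Q k = ht P k + 1"
    using border_strip_height_gap[OF assms(1,2) _ assms(5)] assms(4) by (auto simp: n_def)
  have "region_cells m P Q \<noteq> {}" using assms(5) by (simp add: border_strip_def)
  then have n: "2 \<le> n" using region_cells_nonempty_two_le[OF assms(2)] by (simp add: n_def)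
  note steps = shifted_path_steps[OF len ends n gap]
  interpret snake_polytope n "\<lambda>k. P ! (k - 1)" "ht P" coord
    using n steps ht_Suc[of _ P] len assms(6) by unfold_locales (auto simp: n_def)
  have "lpm_bases m r P Q = strip_bases"
    unfolding strip_bases_def unfolding n_def
    by (rule lpm_bases_shifted[OF len[unfolded n_def] ends[unfolded n_def] gap[unfolded n_def]
          height[unfolded n_def]])
  then have polytope: "lpm_polytope m r P Q coord = convex hull base_points"
    by (simp add: lpm_polytope_def base_points_def incidence_def e_def)
  have "NE_corners = {k. 0 < k \<and> k < n \<and> P ! (k - 1) \<and> \<not> P ! k}"
    "EN_corners = {k. 1 < k \<and> k + 1 < n \<and> \<not> P ! (k - 1) \<and> P ! k}"
    unfolding NE_corners_def EN_corners_def by simp_all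
  then have "card (outside_corners P Q) = card NE_corners + card EN_corners"
    using card_outside_corners_shifted[OF len gap steps(2,4,5)] by simp
  then show ?thesis using card_facets card_labels unfolding polytope n_def by simp
qed

end
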